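(* Let $\mathbf{c},\mathbf{d}$ be (possibly empty) real parameter vectors such that the kernel $K(\mu,n)=\dfrac{(\mathbf{c}+\mu)_n}{(\mathbf{d}+\mu)_n}$ is sign regular of order $3$ on $(0,\infty)\times\mathbb{N}_0$. Let $\mathbf{a}_1,\mathbf{a}_2,\mathbf{b}_1,\mathbf{b}_2$ be positive parameter vectors, let $x>0$, and assume the hypergeometric series below converge with non-vanishing denominator. Let $\mathbf{a}=(\mathbf{a}_1,\mathbf{a}_2)=(a_1,\dots,a_m)$ and $\mathbf{b}=(\mathbf{b}_1,\mathbf{b}_2)=(b_1,\dots,b_n)$ satisfy $m\le n$ and $$\frac{e_n(\mathbf{b})}{e_m(\mathbf{a})}\le\frac{e_{n-1}(\mathbf{b})}{e_{m-1}(\mathbf{a})}\le\dots\le\frac{e_{n-m+1}(\mathbf{b})}{e_1(\mathbf{a})}\le e_{n-m}(\mathbf{b}).$$ Then the function $$F(\mu)=\frac{{}_pF_q\!\left(\begin{matrix}\mathbf{c}+\mu,\ \mathbf{a}_1\\ \mathbf{d}+\mu,\ \mathbf{b}_1\end{matrix}\,\Big|\,x\right)}{{}_sF_t\!\left(\begin{matrix}\mathbf{c}+\mu,\ \mathbf{b}_2\\ \mathbf{d}+\mu,\ \mathbf{a}_2\end{matrix}\,\Big|\,x\right)}$$ is unimodal on $(0,\infty)$.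
   Context: For a vector $\mathbf{c}=(c_1,\dots,c_r)$, $(\mathbf{c}+\mu)_k=\prod_{i=1}^r(c_i+\mu)_k$ (equal to $1$ if $\mathbf{c}$ is empty), where $(y)_k=y(y+1)\cdots(y+k-1)$ is the Pochhammer symbol; similarly $(\mathbf{a})_k=\prod_i(a_i)_k$. ${}_pF_q$ denotes the generalized hypergeometric series $\sum_{k\ge0}\frac{(\text{top parameters})_k}{(\text{bottom parameters})_k}\frac{x^k}{k!}$, with $p$, $q$, $s$, $t$ the total numbers of top/bottom parameters. $e_j(\mathbf{a})$ is the $j$-th elementary symmetric polynomial of the entries of $\mathbf{a}$ ($e_0=1$). A kernel $K:X\times Y\to\mathbb{R}$ is sign regular of order $3$ if there are signs $\varepsilon_1,\varepsilon_2,\varepsilon_3\in\{\pm1\}$ with $\varepsilon_m\det(K(x_i,y_j))_{i,j=1}^m\ge0$ for $m=1,2,3$ and all $x_1<\dots<x_m$, $y_1<\dots<y_m$. A function is unimodal if it changes its direction of monotonicity at most once. *)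

theory Defs
  imports Complex_Main "Jordan_Normal_Form.Determinant"
begin

definition poch_vec :: "real list \<Rightarrow> nat \<Rightarrow> real" where
  "poch_vec cs k = prod_list (map (\<lambda>c. pochhammer c k) cs)"

definition shift_vec :: "real list \<Rightarrow> real \<Rightarrow> real list" where
  "shift_vec cs \<mu> = map (\<lambda>c. c + \<mu>) cs"

definition hyp_term :: "real list \<Rightarrow> real list \<Rightarrow> real \<Rightarrow> nat \<Rightarrow> real" where
  "hyp_term tops bots x k = poch_vec tops k / poch_vec bots k * x ^ k / fact k"

definition hypF :: "real list \<Rightarrow> real list \<Rightarrow> real \<Rightarrow> real" where
  "hypF tops bots x = (\<Sum>k. hyp_term tops bots x k)"

definition esym :: "nat \<Rightarrow> real list \<Rightarrow> real" where
  "esym j xs = (\<Sum>S\<in>{S. S \<subseteq> {..<length xs} \<and> card S = j}. \<Prod>i\<in>S. xs ! i)"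

definition sign_regular3 :: "'a::linorder set \<Rightarrow> 'b::linorder set \<Rightarrow> ('a \<Rightarrow> 'b \<Rightarrow> real) \<Rightarrow> bool" where
  "sign_regular3 X Y K \<longleftrightarrow>
    (\<exists>\<epsilon>::nat \<Rightarrow> real. \<forall>m\<in>{1,2,3}. (\<epsilon> m = 1 \<or> \<epsilon> m = -1) \<and>
       (\<forall>xs ys. (\<forall>i<m. xs i \<in> X \<and> ys i \<in> Y) \<longrightarrow>
          (\<forall>i j. i < j \<longrightarrow> j < m \<longrightarrow> xs i < xs j \<and> ys i < ys j) \<longrightarrow>
          \<epsilon> m * det (mat m m (\<lambda>(i,j). K (xs i) (ys j))) \<ge> 0))"

definition unimodal_on :: "real set \<Rightarrow> (real \<Rightarrow> real) \<Rightarrow> bool" where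
  "unimodal_on S f \<longleftrightarrow> (\<exists>t.
     (monotone_on {y\<in>S. y \<le> t} (\<le>) (\<le>) f \<and> monotone_on {y\<in>S. t \<le> y} (\<le>) (\<ge>) f) \<or>
     (monotone_on {y\<in>S. y \<le> t} (\<le>) (\<ge>) f \<and> monotone_on {y\<in>S. t \<le> y} (\<le>) (\<le>) f))"

end

theory Submission
  imports Defs "HOL-Analysis.Uniform_Limit"
begin

text \<open>With \<open>K(\<mu>, k) = (\<^bold>c + \<mu>)\<^sub>k / (\<^bold>d + \<mu>)\<^sub>k\<close>, numerator and denominator are
  \<open>\<Sum>\<^sub>k K(\<mu>, k) \<alpha>\<^sub>k\<close> and \<open>\<Sum>\<^sub>k K(\<mu>, k) \<beta>\<^sub>k\<close> with positive \<open>\<alpha>, \<beta>\<close> and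
  \<open>\<alpha>\<^sub>k / \<beta>\<^sub>k = (\<^bold>a)\<^sub>k / (\<^bold>b)\<^sub>k\<close>. The chain condition makes \<open>\<Prod>(a\<^sub>i + t) / \<Prod>(b\<^sub>i + t)\<close>
  nonincreasing for \<open>t \<ge> 0\<close>, so \<open>\<alpha>\<^sub>k / \<beta>\<^sub>k\<close> is quasiconcave in \<open>k\<close>: for every level \<open>\<lambda>\<close>
  the coefficients \<open>\<alpha>\<^sub>k - \<lambda> \<beta>\<^sub>k\<close> have the sign pattern \<open>-, +, -\<close>. By the variation
  diminishing property of a sign regular kernel of order 3, \<open>\<mu> \<mapsto> \<Sum>\<^sub>k K(\<mu>, k) (\<alpha>\<^sub>k - \<lambda> \<beta>\<^sub>k)\<close>
  then cannot take the sign pattern \<open>+, -, +\<close> (up to the sign \<open>\<epsilon>\<^sub>2 \<epsilon>\<^sub>3\<close>) at three increasing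
  points. Hence \<open>\<epsilon>\<^sub>2 \<epsilon>\<^sub>3 F\<close> is quasiconcave, and being continuous it is unimodal.\<close>

section \<open>Sign regular kernels and variation diminishing\<close>

definition det3_cols :: "(nat \<Rightarrow> real) \<Rightarrow> (nat \<Rightarrow> real) \<Rightarrow> (nat \<Rightarrow> real) \<Rightarrow> real" where
  "det3_cols u v w =
     u 0 * (v 1 * w 2 - v 2 * w 1) - u 1 * (v 0 * w 2 - v 2 * w 0) + u 2 * (v 0 * w 1 - v 1 * w 0)"

lemma det_mat_1: "Determinant.det (Matrix.mat 1 1 f) = (f (0, 0) :: real)"
  by (simp add: det_single)

lemma det_mat_2: "Determinant.det (Matrix.mat 2 2 f) = f (0, 0) * f (1, 1) - f (0, 1) * (f (1, 0) :: real)"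
  unfolding numeral_2_eq_2
  by (subst laplace_expansion_column[of _ "Suc (Suc 0)" 0])
    (auto simp: cofactor_def lessThan_Suc mat_delete_def det_single)

lemma det_mat_3:
  "Determinant.det (Matrix.mat 3 3 f) =
     det3_cols (\<lambda>i. f (i, 0)) (\<lambda>i. f (i, 1)) (\<lambda>i. f (i, 2 :: nat) :: real)"
proof -
  have det2: "Determinant.det (Matrix.mat (Suc (Suc 0)) (Suc (Suc 0)) g)
      = g (0, 0) * g (1, 1) - g (0, 1) * g (1, 0)" for g :: "nat \<times> nat \<Rightarrow> real"
    using det_mat_2[of g] by (simp add: numeral_2_eq_2)
  show ?thesis
    by (subst laplace_expansion_column[of _ 3 0])
      (auto simp: cofactor_def numeral_3_eq_3 numeral_2_eq_2 lessThan_Suc mat_delete_def det2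
        det3_cols_def algebra_simps)
qed

lemma det3_cols_sums:
  assumes "\<And>i. i < 3 \<Longrightarrow> (\<lambda>k. f k i) sums u i"
  shows "(\<lambda>k. det3_cols (f k) v w) sums det3_cols u v w"
    and "(\<lambda>k. det3_cols v (f k) w) sums det3_cols v u w"
    and "(\<lambda>k. det3_cols v w (f k)) sums det3_cols v w u"
  unfolding det3_cols_def by (intro sums_add sums_diff sums_mult sums_mult2 assms; simp)+

text \<open>Discrete Cauchy--Binet formulas: superposing the columns of a sign regular kernel with
  nonnegative weights whose supports are in increasing order preserves the signs of the minors.\<close>

lemma minor2_suminf_sign:
  fixes u v w0 w1 :: "nat \<Rightarrow> real"
  assumes summable: "summable (\<lambda>k. u k * w0 k)" "summable (\<lambda>k. v k * w0 k)"
      "summable (\<lambda>k. u k * w1 k)" "summable (\<lambda>k. v k * w1 k)"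
    and nonneg: "\<And>k. 0 \<le> w0 k" "\<And>k. 0 \<le> w1 k"
    and sign: "\<And>k0 k1. w0 k0 \<noteq> 0 \<Longrightarrow> w1 k1 \<noteq> 0 \<Longrightarrow> 0 \<le> e * (u k0 * v k1 - u k1 * v k0)"
  shows "0 \<le> e * ((\<Sum>k. u k * w0 k) * (\<Sum>k. v k * w1 k) - (\<Sum>k. u k * w1 k) * (\<Sum>k. v k * w0 k))"
proof -
  have terms: "0 \<le> e * ((u k0 * w0 k0) * (v k1 * w1 k1) - (u k1 * w1 k1) * (v k0 * w0 k0))" for k0 k1
  proof -
    have "e * ((u k0 * w0 k0) * (v k1 * w1 k1) - (u k1 * w1 k1) * (v k0 * w0 k0))
        = w0 k0 * w1 k1 * (e * (u k0 * v k1 - u k1 * v k0))"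
      by (simp add: algebra_simps)
    moreover have "0 \<le> w0 k0 * w1 k1 * (e * (u k0 * v k1 - u k1 * v k0))"
      using sign[of k0 k1] nonneg(1)[of k0] nonneg(2)[of k1]
      by (cases "w0 k0 = 0 \<or> w1 k1 = 0") (auto intro: mult_nonneg_nonneg)
    ultimately show ?thesis by metis
  qed
  have "(\<lambda>k1. e * ((u k0 * w0 k0) * (v k1 * w1 k1) - (u k1 * w1 k1) * (v k0 * w0 k0)))
      sums (e * ((u k0 * w0 k0) * (\<Sum>k. v k * w1 k) - (\<Sum>k. u k * w1 k) * (v k0 * w0 k0)))" for k0
    by (intro sums_mult sums_diff sums_mult2 summable_sums summable)
  hence "0 \<le> e * ((u k0 * w0 k0) * (\<Sum>k. v k * w1 k) - (\<Sum>k. u k * w1 k) * (v k0 * w0 k0))" for k0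
    by (rule sums_le[OF terms sums_zero])
  moreover have "(\<lambda>k0. e * ((u k0 * w0 k0) * (\<Sum>k. v k * w1 k) - (\<Sum>k. u k * w1 k) * (v k0 * w0 k0)))
      sums (e * ((\<Sum>k. u k * w0 k) * (\<Sum>k. v k * w1 k) - (\<Sum>k. u k * w1 k) * (\<Sum>k. v k * w0 k)))"
    by (intro sums_mult sums_diff sums_mult2 summable_sums summable)
  ultimately show ?thesis by (rule sums_le[OF _ sums_zero])
qed

lemma det3_cols_suminf_sign:
  fixes C :: "nat \<Rightarrow> nat \<Rightarrow> real" and w0 w1 w2 :: "nat \<Rightarrow> real"
  assumes summable: "\<And>i. i < 3 \<Longrightarrow> summable (\<lambda>k. C k i * w0 k)"
      "\<And>i. i < 3 \<Longrightarrow> summable (\<lambda>k. C k i * w1 k)"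
      "\<And>i. i < 3 \<Longrightarrow> summable (\<lambda>k. C k i * w2 k)"
    and nonneg: "\<And>k. 0 \<le> w0 k" "\<And>k. 0 \<le> w1 k" "\<And>k. 0 \<le> w2 k"
    and sign: "\<And>k0 k1 k2. w0 k0 \<noteq> 0 \<Longrightarrow> w1 k1 \<noteq> 0 \<Longrightarrow> w2 k2 \<noteq> 0 \<Longrightarrow>
      0 \<le> e * det3_cols (C k0) (C k1) (C k2)"
  shows "0 \<le> e * det3_cols (\<lambda>i. \<Sum>k. C k i * w0 k) (\<lambda>i. \<Sum>k. C k i * w1 k) (\<lambda>i. \<Sum>k. C k i * w2 k)"
proof -
  define H0 where "H0 = (\<lambda>i. \<Sum>k. C k i * w0 k)"
  define H1 where "H1 = (\<lambda>i. \<Sum>k. C k i * w1 k)"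
  define H2 where "H2 = (\<lambda>i. \<Sum>k. C k i * w2 k)"
  have terms: "0 \<le> e * det3_cols (\<lambda>i. C k0 i * w0 k0) (\<lambda>i. C k1 i * w1 k1) (\<lambda>i. C k2 i * w2 k2)"
    for k0 k1 k2
  proof -
    have "e * det3_cols (\<lambda>i. C k0 i * w0 k0) (\<lambda>i. C k1 i * w1 k1) (\<lambda>i. C k2 i * w2 k2)
        = w0 k0 * w1 k1 * w2 k2 * (e * det3_cols (C k0) (C k1) (C k2))"
      unfolding det3_cols_def by (simp add: algebra_simps)
    moreover have "0 \<le> w0 k0 * w1 k1 * w2 k2 * (e * det3_cols (C k0) (C k1) (C k2))"
      using sign[of k0 k1 k2] nonneg(1)[of k0] nonneg(2)[of k1] nonneg(3)[of k2]
      by (cases "w0 k0 = 0 \<or> w1 k1 = 0 \<or> w2 k2 = 0") (auto intro: mult_nonneg_nonneg)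
    ultimately show ?thesis by metis
  qed
  have "0 \<le> e * det3_cols (\<lambda>i. C k0 i * w0 k0) (\<lambda>i. C k1 i * w1 k1) H2" for k0 k1
    unfolding H2_def
    by (rule sums_le[OF terms sums_zero]) (auto intro!: sums_mult det3_cols_sums summable_sums summable)
  hence "0 \<le> e * det3_cols (\<lambda>i. C k0 i * w0 k0) H1 H2" for k0
    unfolding H1_def by (rule sums_le[OF _ sums_zero]) (auto intro!: sums_mult det3_cols_sums summable_sums summable)
  hence "0 \<le> e * det3_cols H0 H1 H2"
    unfolding H0_def by (rule sums_le[OF _ sums_zero]) (auto intro!: sums_mult det3_cols_sums summable_sums summable)
  thus ?thesis unfolding H0_def H1_def H2_def .
qed

lemma alternating_sums_same_sign_if_minors_vanish:
  fixes u v :: "nat \<Rightarrow> real"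
  assumes minors: "\<And>a b. a < b \<Longrightarrow> b < 3 \<Longrightarrow> u a * v b = u b * v a"
    and nonneg: "\<And>j. j < 3 \<Longrightarrow> 0 \<le> u j" "\<And>j. j < 3 \<Longrightarrow> 0 \<le> v j"
  shows "0 \<le> (- u 0 + u 1 - u 2) * (- v 0 + v 1 - v 2)"
proof -
  define A where "A w = - w 0 + w 1 - w 2" for w :: "nat \<Rightarrow> real"
  have "u j * A v = v j * A u" if "j < 3" for j
  proof -
    have "j = 0 \<or> j = 1 \<or> j = 2" using that by auto
    thus ?thesis using minors[of 0 1] minors[of 0 2] minors[of 1 2] by (auto simp: A_def algebra_simps)
  qed
  hence square: "u j * (A u * A v) = v j * (A u)\<^sup>2" if "j < 3" for j
    using that by (simp add: power2_eq_square algebra_simps)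
  show ?thesis
  proof (cases "\<exists>j<3. 0 < u j")
    case True
    then obtain j where "j < 3" "0 < u j" by blast
    moreover have "0 \<le> u j * (A u * A v)" using square[OF \<open>j < 3\<close>] nonneg(2)[OF \<open>j < 3\<close>] by simp
    ultimately show ?thesis unfolding A_def by (simp add: zero_le_mult_iff)
  next
    case False
    hence "u j = 0" if "j < 3" for j using nonneg(1)[OF that] that by (meson not_less order.antisym)
    from this[of 0] this[of 1] this[of 2] show ?thesis by simp
  qed
qed

lemma no_sign_pattern_3x3:
  fixes x :: "nat \<Rightarrow> nat \<Rightarrow> real"
  assumes e: "e2 = 1 \<or> e2 = -1" "e3 = 1 \<or> e3 = -1"
    and nonneg: "\<And>i j. i < 3 \<Longrightarrow> j < 3 \<Longrightarrow> 0 \<le> x i j"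
    and minors: "\<And>i i' a b. i < i' \<Longrightarrow> i' < 3 \<Longrightarrow> a < b \<Longrightarrow> b < 3 \<Longrightarrow>
      0 \<le> e2 * (x i a * x i' b - x i b * x i' a)"
    and det: "0 \<le> e3 * det3_cols (\<lambda>i. x i 0) (\<lambda>i. x i 1) (\<lambda>i. x i 2)"
  shows "\<not> (0 < e2 * e3 * (- x 0 0 + x 0 1 - x 0 2) \<and> e2 * e3 * (- x 1 0 + x 1 1 - x 1 2) < 0
           \<and> 0 < e2 * e3 * (- x 2 0 + x 2 1 - x 2 2))"
proof
  define s where "s = e2 * e3"
  define G where "G i = - x i 0 + x i 1 - x i 2" for i
  assume "0 < e2 * e3 * (- x 0 0 + x 0 1 - x 0 2) \<and> e2 * e3 * (- x 1 0 + x 1 1 - x 1 2) < 0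
           \<and> 0 < e2 * e3 * (- x 2 0 + x 2 1 - x 2 2)"
  hence G: "0 < s * G 0" "s * G 1 < 0" "0 < s * G 2" unfolding s_def G_def by auto
  \<comment> \<open>Replacing one column by the alternating column sum \<open>G\<close> only changes the sign of the
    determinant; expanding along \<open>G\<close>, the three terms have the same sign, opposite to that of
    the determinant, so they all vanish.\<close>
  have minor_vanishes: "M2 = 0"
    if expansion: "G 0 * M0 - G 1 * M1 + G 2 * M2 = - det3_cols (\<lambda>i. x i 0) (\<lambda>i. x i 1) (\<lambda>i. x i 2)"
      and M: "0 \<le> e2 * M0" "0 \<le> e2 * M1" "0 \<le> e2 * M2" for M0 M1 M2
  proof -
    have "s * e2 = e3" using e(1) by (auto simp: s_def)
    hence "e3 * (G 0 * M0 - G 1 * M1 + G 2 * M2)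
        = (s * G 0) * (e2 * M0) + (- (s * G 1)) * (e2 * M1) + (s * G 2) * (e2 * M2)"
      by (auto simp: algebra_simps)
    moreover have "e3 * (G 0 * M0 - G 1 * M1 + G 2 * M2) \<le> 0" using expansion det by simp
    ultimately have "(s * G 0) * (e2 * M0) + (- (s * G 1)) * (e2 * M1) + (s * G 2) * (e2 * M2) \<le> 0"
      by simp
    moreover have "0 \<le> (s * G 0) * (e2 * M0)" "0 \<le> (- (s * G 1)) * (e2 * M1)"
      using G M by (simp_all add: mult_nonpos_nonneg)
    ultimately have "(s * G 2) * (e2 * M2) = 0"
      using G(3) M(3) by (smt (verit) mult_nonneg_nonneg)
    thus ?thesis using G(3) e(1) by auto
  qed
  have "x 0 a * x 1 b = x 0 b * x 1 a" if "a < b" "b < 3" for a b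
  proof -
    have "(a = 0 \<and> b = 1) \<or> (a = 0 \<and> b = 2) \<or> (a = 1 \<and> b = 2)" using that by auto
    hence "G 0 * (x 1 a * x 2 b - x 1 b * x 2 a) - G 1 * (x 0 a * x 2 b - x 0 b * x 2 a)
        + G 2 * (x 0 a * x 1 b - x 0 b * x 1 a) = - det3_cols (\<lambda>i. x i 0) (\<lambda>i. x i 1) (\<lambda>i. x i 2)"
      by (auto simp: G_def det3_cols_def algebra_simps)
    moreover have "0 \<le> e2 * (x 1 a * x 2 b - x 1 b * x 2 a)" "0 \<le> e2 * (x 0 a * x 2 b - x 0 b * x 2 a)"
      "0 \<le> e2 * (x 0 a * x 1 b - x 0 b * x 1 a)"
      using that by (auto intro: minors)
    ultimately have "x 0 a * x 1 b - x 0 b * x 1 a = 0" by (rule minor_vanishes)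
    thus ?thesis by simp
  qed
  hence "0 \<le> G 0 * G 1"
    unfolding G_def by (rule alternating_sums_same_sign_if_minors_vanish) (auto intro: nonneg)
  moreover have "s * s = 1" using e by (auto simp: s_def)
  ultimately have "0 \<le> (s * G 0) * (s * G 1)" by (metis mult.assoc mult.commute mult_1)
  thus False using mult_pos_neg[OF G(1) G(2)] by linarith
qed

lemma nonneg_block_decomposition:
  fixes g :: "nat \<Rightarrow> real"
  assumes convex: "\<And>i j l. i < j \<Longrightarrow> j < l \<Longrightarrow> 0 \<le> g i \<Longrightarrow> 0 \<le> g l \<Longrightarrow> 0 \<le> g j"
  obtains W :: "nat \<Rightarrow> nat \<Rightarrow> real"
  where "\<And>j k. 0 \<le> W j k" "\<And>j k. W j k \<le> \<bar>g k\<bar>" "\<And>k. g k = - W 0 k + W 1 k - W 2 k"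
    and "\<And>a b k k'. a < b \<Longrightarrow> b < 3 \<Longrightarrow> W a k \<noteq> 0 \<Longrightarrow> W b k' \<noteq> 0 \<Longrightarrow> k < k'"
proof -
  define before where "before k \<longleftrightarrow> g k < 0 \<and> (\<exists>j>k. 0 \<le> g j)" for k
  define after where "after k \<longleftrightarrow> g k < 0 \<and> \<not> (\<exists>j>k. 0 \<le> g j)" for k
  define W :: "nat \<Rightarrow> nat \<Rightarrow> real" where "W j k =
    (if j = 0 then if before k then - g k else 0
     else if j = 1 then if 0 \<le> g k then g k else 0
     else if after k then - g k else 0)" for j k
  have before_nonneg: "k < k'" if "before k" "0 \<le> g k'" for k k'
  proof -
    obtain j where "k < j" "0 \<le> g j" "g k < 0" using \<open>before k\<close> by (auto simp: before_def)
    thus ?thesis using convex[of k' k j] that(2) by (cases k k' rule: linorder_cases) auto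
  qed
  have nonneg_after: "k < k'" if "0 \<le> g k" "after k'" for k k'
    using that by (auto simp: after_def not_less_iff_gr_or_eq)
  have before_after: "k < k'" if "before k" "after k'" for k k'
    using that by (auto simp: before_def after_def) (meson less_le_trans not_le)
  show thesis
  proof (rule that)
    show "0 \<le> W j k" "W j k \<le> \<bar>g k\<bar>" "g k = - W 0 k + W 1 k - W 2 k" for j k
      by (auto simp: W_def before_def after_def)
    show "k < k'" if "a < b" "b < 3" "W a k \<noteq> 0" "W b k' \<noteq> 0" for a b k k'
    proof -
      have "(a = 0 \<and> b = 1) \<or> (a = 0 \<and> b = 2) \<or> (a = 1 \<and> b = 2)" using that(1,2) by auto
      thus ?thesis using that(3,4) before_nonneg nonneg_after before_after
        by (auto simp: W_def split: if_splits)
    qed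
  qed
qed

lemma kernel_series_no_sign_pattern:
  fixes K :: "real \<Rightarrow> nat \<Rightarrow> real" and g y :: "nat \<Rightarrow> real"
  assumes e: "e2 = 1 \<or> e2 = -1" "e3 = 1 \<or> e3 = -1"
    and K_nonneg: "\<And>\<mu> k. 0 < \<mu> \<Longrightarrow> 0 \<le> K \<mu> k"
    and SR2: "\<And>\<mu> \<mu>' k k'. 0 < \<mu> \<Longrightarrow> \<mu> < \<mu>' \<Longrightarrow> k < k' \<Longrightarrow>
      0 \<le> e2 * (K \<mu> k * K \<mu>' k' - K \<mu> k' * K \<mu>' k)"
    and SR3: "\<And>y k0 k1 k2. 0 < y 0 \<Longrightarrow> y 0 < y 1 \<Longrightarrow> y 1 < y 2 \<Longrightarrow> k0 < k1 \<Longrightarrow> k1 < k2 \<Longrightarrow>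
      0 \<le> e3 * det3_cols (\<lambda>i. K (y i) k0) (\<lambda>i. K (y i) k1) (\<lambda>i. K (y i) k2)"
    and convex: "\<And>i j l. i < j \<Longrightarrow> j < l \<Longrightarrow> 0 \<le> g i \<Longrightarrow> 0 \<le> g l \<Longrightarrow> 0 \<le> g j"
    and summable: "\<And>\<mu>. 0 < \<mu> \<Longrightarrow> summable (\<lambda>k. K \<mu> k * \<bar>g k\<bar>)"
    and y: "0 < y 0" "y 0 < y 1" "y 1 < y 2"
  shows "\<not> (0 < e2 * e3 * (\<Sum>k. K (y 0) k * g k) \<and> e2 * e3 * (\<Sum>k. K (y 1) k * g k) < 0
            \<and> 0 < e2 * e3 * (\<Sum>k. K (y 2) k * g k))"
proof -
  obtain W :: "nat \<Rightarrow> nat \<Rightarrow> real" where W_nonneg: "\<And>j k. 0 \<le> W j k" and W_le: "\<And>j k. W j k \<le> \<bar>g k\<bar>"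
    and g_eq: "\<And>k. g k = - W 0 k + W 1 k - W 2 k"
    and W_order: "\<And>a b k k'. a < b \<Longrightarrow> b < 3 \<Longrightarrow> W a k \<noteq> 0 \<Longrightarrow> W b k' \<noteq> 0 \<Longrightarrow> k < k'"
    using nonneg_block_decomposition[of g] convex by blast
  have y_mono: "y i < y i'" if "i < i'" "i' < 3" for i i'
    using that y by (auto simp: numeral_3_eq_3 numeral_2_eq_2 less_Suc_eq)
  have y_pos: "0 < y i" if "i < 3" for i
    using y(1) y_mono[of 0 i] that by (cases "i = 0") auto
  have summable_W: "summable (\<lambda>k. K \<mu> k * W j k)" if "0 < \<mu>" for \<mu> j
    by (rule summable_comparison_test'[OF summable[OF that]])
      (use K_nonneg[OF that] W_nonneg W_le in \<open>auto intro: mult_left_mono\<close>)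
  define x where "x i j = (\<Sum>k. K (y i) k * W j k)" for i j
  have x_nonneg: "0 \<le> x i j" if "i < 3" for i j
    unfolding x_def using K_nonneg[OF y_pos[OF that]] W_nonneg
    by (intro suminf_nonneg summable_W y_pos that) auto
  have series_eq: "(\<Sum>k. K (y i) k * g k) = - x i 0 + x i 1 - x i 2" if "i < 3" for i
  proof -
    have "(\<lambda>k. - (K (y i) k * W 0 k) + K (y i) k * W 1 k - K (y i) k * W 2 k) sums (- x i 0 + x i 1 - x i 2)"
      unfolding x_def by (intro sums_diff sums_add sums_minus summable_sums summable_W y_pos that)
    thus ?thesis by (simp add: g_eq algebra_simps sums_iff)
  qed
  have det: "0 \<le> e3 * det3_cols (\<lambda>i. x i 0) (\<lambda>i. x i 1) (\<lambda>i. x i 2)"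
    unfolding x_def
  proof (rule det3_cols_suminf_sign)
    fix k0 k1 k2 assume "W 0 k0 \<noteq> 0" "W 1 k1 \<noteq> 0" "W 2 k2 \<noteq> 0"
    hence "k0 < k1" "k1 < k2" using W_order[of 0 1 k0 k1] W_order[of 1 2 k1 k2] by simp_all
    thus "0 \<le> e3 * det3_cols (\<lambda>i. K (y i) k0) (\<lambda>i. K (y i) k1) (\<lambda>i. K (y i) k2)"
      using SR3 y by blast
  qed (auto intro: summable_W y_pos W_nonneg)
  have minors: "0 \<le> e2 * (x i a * x i' b - x i b * x i' a)"
    if "i < i'" "i' < 3" "a < b" "b < 3" for i i' a b
    unfolding x_def
  proof (rule minor2_suminf_sign)
    fix k k' assume "W a k \<noteq> 0" "W b k' \<noteq> 0"
    hence "k < k'" using W_order that(3,4) by blast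
    thus "0 \<le> e2 * (K (y i) k * K (y i') k' - K (y i) k' * K (y i') k)"
      using SR2 y_pos y_mono that by simp
  qed (use y_pos[of i] y_pos[of i'] that in \<open>auto intro: summable_W W_nonneg\<close>)
  show ?thesis
    using no_sign_pattern_3x3[OF e x_nonneg minors det] series_eq[of 0] series_eq[of 1] series_eq[of 2]
    by simp
qed

section \<open>Continuity and unimodality\<close>

lemma isCont_kernel_series:
  fixes K :: "real \<Rightarrow> nat \<Rightarrow> real" and f :: "nat \<Rightarrow> real"
  assumes K_cont: "\<And>\<mu> k. 0 < \<mu> \<Longrightarrow> isCont (\<lambda>\<mu>. K \<mu> k) \<mu>"
    and K_nonneg: "\<And>\<mu> k. 0 < \<mu> \<Longrightarrow> 0 \<le> K \<mu> k"
    and K_between: "\<And>u \<mu> v k. 0 < u \<Longrightarrow> u \<le> \<mu> \<Longrightarrow> \<mu> \<le> v \<Longrightarrow> K \<mu> k \<le> max (K u k) (K v k)"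
    and f_nonneg: "\<And>k. 0 \<le> f k"
    and summable: "\<And>\<mu>. 0 < \<mu> \<Longrightarrow> summable (\<lambda>k. K \<mu> k * f k)"
    and "0 < \<mu>\<^sub>0"
  shows "isCont (\<lambda>\<mu>. \<Sum>k. K \<mu> k * f k) \<mu>\<^sub>0"
proof -
  define u where "u = \<mu>\<^sub>0 / 2"
  define v where "v = 2 * \<mu>\<^sub>0"
  have u: "0 < u" "u < \<mu>\<^sub>0" and v: "\<mu>\<^sub>0 < v" using \<open>0 < \<mu>\<^sub>0\<close> by (simp_all add: u_def v_def)
  \<comment> \<open>Weierstrass M-test on \<open>{u<..<v}\<close>, dominating by the values at the endpoints.\<close>
  have "uniform_limit {u<..<v} (\<lambda>n \<mu>. \<Sum>k<n. K \<mu> k * f k) (\<lambda>\<mu>. \<Sum>k. K \<mu> k * f k) sequentially"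
  proof (rule Weierstrass_m_test)
    show "summable (\<lambda>k. (K u k + K v k) * f k)"
      using summable[of u] summable[of v] u v by (simp add: distrib_right summable_add)
    fix k \<mu> assume "\<mu> \<in> {u<..<v}"
    hence "K \<mu> k \<le> K u k + K v k"
      using K_between[of u \<mu> v k] K_nonneg[of u k] K_nonneg[of v k] u v by auto
    thus "norm (K \<mu> k * f k) \<le> (K u k + K v k) * f k"
      using K_nonneg[of \<mu> k] f_nonneg[of k] \<open>\<mu> \<in> {u<..<v}\<close> u by (auto intro: mult_right_mono)
  qed
  moreover have "continuous_on {u<..<v} (\<lambda>\<mu>. \<Sum>k<n. K \<mu> k * f k)" for n
    using u by (intro continuous_on_sum continuous_on_mult_right continuous_at_imp_continuous_on)
      (auto intro: K_cont)
  ultimately have "continuous_on {u<..<v} (\<lambda>\<mu>. \<Sum>k. K \<mu> k * f k)"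
    by (intro uniform_limit_theorem) auto
  thus ?thesis using u v by (simp add: continuous_on_eq_continuous_at)
qed

definition quasiconcave_on :: "'a::linorder set \<Rightarrow> ('a \<Rightarrow> 'b::linorder) \<Rightarrow> bool" where
  "quasiconcave_on S f \<longleftrightarrow> (\<forall>x\<in>S. \<forall>y\<in>S. \<forall>z\<in>S. x < y \<longrightarrow> y < z \<longrightarrow> min (f x) (f z) \<le> f y)"

lemma unimodal_on_uminus_iff: "unimodal_on S (\<lambda>x. - f x) \<longleftrightarrow> unimodal_on S f"
  unfolding unimodal_on_def monotone_on_def by (auto simp del: le_minus_iff)

lemma isCont_ge_if_ge_on_left:
  fixes f :: "real \<Rightarrow> real"
  assumes "isCont f t" "x < t" "\<And>w. x < w \<Longrightarrow> w < t \<Longrightarrow> c \<le> f w"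
  shows "c \<le> f t"
proof (rule tendsto_lowerbound)
  show "(f \<longlongrightarrow> f t) (at_left t)"
    using assms(1) by (simp add: isCont_def filterlim_at_split)
  show "eventually (\<lambda>w. c \<le> f w) (at_left t)"
    using eventually_at_left_real[OF assms(2)] by eventually_elim (use assms(3) in auto)
qed simp

lemma isCont_ge_if_ge_on_right:
  fixes f :: "real \<Rightarrow> real"
  assumes "isCont f t" "t < y" "\<And>w. t < w \<Longrightarrow> w < y \<Longrightarrow> c \<le> f w"
  shows "c \<le> f t"
proof (rule tendsto_lowerbound)
  show "(f \<longlongrightarrow> f t) (at_right t)"
    using assms(1) by (simp add: isCont_def filterlim_at_split)
  show "eventually (\<lambda>w. c \<le> f w) (at_right t)"
    using eventually_at_right_real[OF assms(2)] by eventually_elim (use assms(3) in auto)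
qed simp

lemma unimodal_on_if_monotone_around:
  fixes f :: "real \<Rightarrow> real"
  assumes cont: "continuous_on {a<..} f" and "a \<le> t"
    and incr: "\<And>x y. a < x \<Longrightarrow> x \<le> y \<Longrightarrow> y < t \<Longrightarrow> f x \<le> f y"
    and decr: "\<And>x y. t < x \<Longrightarrow> x \<le> y \<Longrightarrow> f y \<le> f x"
  shows "unimodal_on {a<..} f"
proof -
  have isCont_at: "isCont f y" if "a < y" for y
    using cont that by (simp add: continuous_on_eq_continuous_at)
  have "monotone_on {y \<in> {a<..}. y \<le> t} (\<le>) (\<le>) f"
  proof (rule monotone_onI)
    fix x y assume x: "x \<in> {y \<in> {a<..}. y \<le> t}" and y: "y \<in> {y \<in> {a<..}. y \<le> t}" and "x \<le> y"
    show "f x \<le> f y"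
    proof (cases "y < t \<or> x = y")
      case False
      hence "y = t" "x < t" using x y \<open>x \<le> y\<close> by auto
      thus ?thesis using isCont_at x incr by (auto intro: isCont_ge_if_ge_on_left)
    qed (use x incr \<open>x \<le> y\<close> in auto)
  qed
  moreover have "monotone_on {y \<in> {a<..}. t \<le> y} (\<le>) (\<ge>) f"
  proof (rule monotone_onI)
    fix x y assume x: "x \<in> {y \<in> {a<..}. t \<le> y}" and "y \<in> {y \<in> {a<..}. t \<le> y}" "x \<le> y"
    show "f y \<le> f x"
    proof (cases "t < x \<or> x = y")
      case False
      hence "x = t" "t < y" using x \<open>x \<le> y\<close> by auto
      thus ?thesis using isCont_at x decr by (auto intro: isCont_ge_if_ge_on_right)
    qed (use decr \<open>x \<le> y\<close> in auto)
  qed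
  ultimately show ?thesis unfolding unimodal_on_def by blast
qed

text \<open>Without continuity this fails: a quasiconcave function may jump down at its maximum point.\<close>

lemma unimodal_on_if_quasiconcave:
  fixes f :: "real \<Rightarrow> real"
  assumes cont: "continuous_on {a<..} f" and qc: "quasiconcave_on {a<..} f"
  shows "unimodal_on {a<..} f"
proof -
  define D where "D = {y. a < y \<and> (\<exists>z. a < z \<and> z < y \<and> f y < f z)}"
  have D_decreasing: "f w \<le> f y \<and> w \<in> D" if "y \<in> D" "y < w" for y w
  proof -
    obtain z where z: "a < z" "z < y" "f y < f z" using \<open>y \<in> D\<close> by (auto simp: D_def)
    have "min (f z) (f w) \<le> f y" using qc z that by (auto simp: quasiconcave_on_def D_def)
    hence "f w \<le> f y" using z by linarith
    thus ?thesis using z that by (auto simp: D_def intro!: exI[of _ z])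
  qed
  have not_D: "f z \<le> f y" if "a < z" "z < y" "y \<notin> D" for y z
    using that by (force simp: D_def)
  show ?thesis
  proof (cases "D = {}")
    case True
    hence "monotone_on {y \<in> {a<..}. a \<le> y} (\<le>) (\<le>) f"
      using not_D by (auto simp: monotone_on_def order_le_less)
    moreover have "monotone_on {y \<in> {a<..}. y \<le> a} (\<le>) (\<ge>) f" by (auto simp: monotone_on_def)
    ultimately show ?thesis unfolding unimodal_on_def by blast
  next
    case False
    define t where "t = Inf D"
    have bdd: "bdd_below D" unfolding D_def bdd_below_def by (rule exI[of _ a]) auto
    show ?thesis
    proof (rule unimodal_on_if_monotone_around[OF cont])
      show "a \<le> t" using False unfolding t_def by (intro cInf_greatest) (auto simp: D_def)
      show "f x \<le> f y" if "a < x" "x \<le> y" "y < t" for x y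
        using not_D[of x y] cInf_lower[OF _ bdd, of y] that by (cases "x = y") (auto simp: t_def)
      show "f y \<le> f x" if xy: "t < x" "x \<le> y" for x y
      proof -
        obtain d where "d \<in> D" "d < x" using xy(1) False bdd unfolding t_def by (meson cInf_less_iff)
        hence "x \<in> D" using D_decreasing by blast
        thus ?thesis using D_decreasing[of x y] xy by (cases "x = y") auto
      qed
    qed
  qed
qed

section \<open>Quasiconcavity of the ratio of Pochhammer products\<close>

lemma prod_list_plus_esym:
  "prod_list (map (\<lambda>a. a + t) xs) = (\<Sum>j\<le>length xs. esym j xs * t ^ (length xs - j))"
proof -
  let ?I = "{..<length xs}"
  have "prod_list (map (\<lambda>a. a + t) xs) = (\<Prod>i\<in>?I. xs ! i + t)"
    by (simp add: prod.list_conv_set_nth atLeast0LessThan)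
  also have "\<dots> = (\<Sum>S\<in>Pow ?I. (\<Prod>i\<in>S. xs ! i) * t ^ card (?I - S))"
    by (subst prod_add) simp_all
  also have "\<dots> = (\<Sum>S\<in>Pow ?I. (\<Prod>i\<in>S. xs ! i) * t ^ (length xs - card S))"
    by (intro sum.cong refl) (simp add: card_Diff_subset finite_subset)
  also have "\<dots> = (\<Sum>j\<le>length xs. \<Sum>S\<in>{S. S \<in> Pow ?I \<and> card S = j}. (\<Prod>i\<in>S. xs ! i) * t ^ (length xs - card S))"
    by (rule sum.group[symmetric]) (auto simp: card_mono[of ?I, simplified])
  also have "\<dots> = (\<Sum>j\<le>length xs. esym j xs * t ^ (length xs - j))"
    unfolding esym_def by (intro sum.cong refl) (auto simp: sum_distrib_right intro!: sum.cong)
  finally show ?thesis .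
qed

lemma esym_nonneg: "\<forall>v\<in>set xs. 0 \<le> v \<Longrightarrow> 0 \<le> esym j xs"
  unfolding esym_def by (intro sum_nonneg prod_nonneg) auto

lemma esym_pos:
  assumes "\<forall>v\<in>set xs. 0 < v" "j \<le> length xs"
  shows "0 < esym j xs"
  unfolding esym_def
proof (rule sum_pos2)
  show "finite {S. S \<subseteq> {..<length xs} \<and> card S = j}"
    by (rule finite_subset[of _ "Pow {..<length xs}"]) auto
  show "{..<j} \<in> {S. S \<subseteq> {..<length xs} \<and> card S = j}" using assms(2) by auto
  show "0 < (\<Prod>i\<in>{..<j}. xs ! i)" using assms by (intro prod_pos) auto
  show "0 \<le> (\<Prod>i\<in>S. xs ! i)" if "S \<in> {S. S \<subseteq> {..<length xs} \<and> card S = j}" for S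
    using assms that by (intro prod_nonneg) (auto simp: less_imp_le)
qed

lemma power_mult_power_swap_le:
  fixes t t' :: "'a::linordered_semidom"
  assumes "0 \<le> t" "t \<le> t'" "n \<le> m"
  shows "t ^ m * t' ^ n \<le> t' ^ m * t ^ n"
proof -
  have "t ^ (m - n) * (t ^ n * t' ^ n) \<le> t' ^ (m - n) * (t ^ n * t' ^ n)"
    using assms by (intro mult_right_mono power_mono) auto
  moreover have "m = n + (m - n)" using assms(3) by simp
  ultimately show ?thesis by (metis (no_types, lifting) mult.assoc mult.commute power_add)
qed

lemma sum_powers_higher_degree_cross_le:
  fixes p q :: "nat \<Rightarrow> real" and t t' :: real
  assumes "finite I" "finite J" "\<And>i. i \<in> I \<Longrightarrow> 0 \<le> p i" "\<And>j. j \<in> J \<Longrightarrow> 0 \<le> q j"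
    and "\<And>i j. i \<in> I \<Longrightarrow> j \<in> J \<Longrightarrow> d j \<le> e i" and "0 \<le> t" "t \<le> t'"
  shows "(\<Sum>i\<in>I. p i * t ^ e i) * (\<Sum>j\<in>J. q j * t' ^ d j)
       \<le> (\<Sum>i\<in>I. p i * t' ^ e i) * (\<Sum>j\<in>J. q j * t ^ d j)"
proof -
  have "(\<Sum>i\<in>I. p i * t ^ e i) * (\<Sum>j\<in>J. q j * t' ^ d j) = (\<Sum>i\<in>I. \<Sum>j\<in>J. p i * q j * (t ^ e i * t' ^ d j))"
    by (simp add: sum_product algebra_simps)
  also have "\<dots> \<le> (\<Sum>i\<in>I. \<Sum>j\<in>J. p i * q j * (t' ^ e i * t ^ d j))"
    using assms by (intro sum_mono mult_left_mono power_mult_power_swap_le mult_nonneg_nonneg) auto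
  also have "\<dots> = (\<Sum>i\<in>I. p i * t' ^ e i) * (\<Sum>j\<in>J. q j * t ^ d j)"
    by (simp add: sum_product algebra_simps)
  finally show ?thesis .
qed

text \<open>A Chebyshev-type sum inequality: the weights \<open>\<rho>\<close> decrease while the degrees \<open>m - j\<close> do.\<close>

lemma sum_powers_antimono_weights_cross_le:
  fixes p \<rho> :: "nat \<Rightarrow> real" and t t' :: real
  assumes p: "\<And>j. j \<le> m \<Longrightarrow> 0 \<le> p j" and \<rho>: "\<And>j l. j \<le> l \<Longrightarrow> l \<le> m \<Longrightarrow> \<rho> l \<le> \<rho> j"
    and t: "0 \<le> t" "t \<le> t'"
  shows "(\<Sum>j\<le>m. \<rho> j * p j * t ^ (m - j)) * (\<Sum>j\<le>m. p j * t' ^ (m - j))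
       \<le> (\<Sum>j\<le>m. \<rho> j * p j * t' ^ (m - j)) * (\<Sum>j\<le>m. p j * t ^ (m - j))"
proof -
  define Z where "Z j l = p j * p l * (t ^ (m - j) * t' ^ (m - l)) * (\<rho> j - \<rho> l)" for j l
  have "(\<Sum>j\<le>m. \<rho> j * p j * t ^ (m - j)) * (\<Sum>j\<le>m. p j * t' ^ (m - j))
      = (\<Sum>j\<le>m. \<Sum>l\<le>m. \<rho> j * p j * p l * (t ^ (m - j) * t' ^ (m - l)))"
    unfolding sum_product by (simp add: algebra_simps)
  moreover have "(\<Sum>j\<le>m. \<rho> j * p j * t' ^ (m - j)) * (\<Sum>j\<le>m. p j * t ^ (m - j))
      = (\<Sum>j\<le>m. \<Sum>l\<le>m. \<rho> j * p j * p l * (t' ^ (m - j) * t ^ (m - l)))"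
    unfolding sum_product by (simp add: algebra_simps)
  moreover have "\<dots> = (\<Sum>j\<le>m. \<Sum>l\<le>m. \<rho> l * p l * p j * (t' ^ (m - l) * t ^ (m - j)))"
    by (rule sum.swap)
  ultimately have diff: "(\<Sum>j\<le>m. \<rho> j * p j * t ^ (m - j)) * (\<Sum>j\<le>m. p j * t' ^ (m - j))
      - (\<Sum>j\<le>m. \<rho> j * p j * t' ^ (m - j)) * (\<Sum>j\<le>m. p j * t ^ (m - j)) = (\<Sum>j\<le>m. \<Sum>l\<le>m. Z j l)"
    by (simp add: Z_def sum_subtractf[symmetric] algebra_simps)
  have "(\<Sum>j\<le>m. \<Sum>l\<le>m. Z j l) = (\<Sum>j\<le>m. \<Sum>l\<le>m. Z l j)" by (rule sum.swap)
  hence "2 * (\<Sum>j\<le>m. \<Sum>l\<le>m. Z j l) = (\<Sum>j\<le>m. \<Sum>l\<le>m. Z j l + Z l j)"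
    by (simp add: sum.distrib)
  also have "\<dots> \<le> 0"
  proof (intro sum_nonpos)
    fix j l assume jl: "j \<in> {..m}" "l \<in> {..m}"
    have "(\<rho> j - \<rho> l) * (t ^ (m - j) * t' ^ (m - l) - t' ^ (m - j) * t ^ (m - l)) \<le> 0"
    proof (cases "j \<le> l")
      case True
      hence "\<rho> l \<le> \<rho> j" "t ^ (m - j) * t' ^ (m - l) \<le> t' ^ (m - j) * t ^ (m - l)"
        using \<rho> jl t by (auto intro: power_mult_power_swap_le)
      thus ?thesis by (simp add: mult_nonneg_nonpos)
    next
      case False
      hence "\<rho> j \<le> \<rho> l" "t ^ (m - l) * t' ^ (m - j) \<le> t' ^ (m - l) * t ^ (m - j)"
        using \<rho> jl t by (auto intro: power_mult_power_swap_le)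
      thus ?thesis by (simp add: mult_nonpos_nonneg mult.commute)
    qed
    moreover have "Z j l + Z l j
        = p j * p l * ((\<rho> j - \<rho> l) * (t ^ (m - j) * t' ^ (m - l) - t' ^ (m - j) * t ^ (m - l)))"
      by (simp add: Z_def algebra_simps)
    ultimately show "Z j l + Z l j \<le> 0" using p jl by (simp add: mult_nonneg_nonpos)
  qed
  finally show ?thesis using diff by simp
qed

lemma poch_vec_append: "poch_vec (xs @ ys) k = poch_vec xs k * poch_vec ys k"
  unfolding poch_vec_def by simp

lemma poch_vec_0 [simp]: "poch_vec xs 0 = 1"
  unfolding poch_vec_def by (induction xs) auto

lemma poch_vec_Suc: "poch_vec xs (Suc k) = poch_vec xs k * prod_list (map (\<lambda>a. a + real k) xs)"
  unfolding poch_vec_def by (induction xs) (auto simp: pochhammer_Suc algebra_simps)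

lemma poch_vec_pos: "\<forall>v\<in>set xs. 0 < v \<Longrightarrow> 0 < poch_vec xs k"
  unfolding poch_vec_def by (induction xs) (auto intro!: mult_pos_pos pochhammer_pos)

lemma prod_list_shift_pos: "\<forall>v\<in>set xs. 0 < v \<Longrightarrow> 0 \<le> (t::real) \<Longrightarrow> 0 < prod_list (map (\<lambda>a. a + t) xs)"
  by (induction xs) (auto simp: add_pos_nonneg)

lemma isCont_poch_vec_shift: "isCont (\<lambda>\<mu>. poch_vec (shift_vec cs \<mu>) k) \<mu>"
proof (induction cs)
  case (Cons c cs)
  have "poch_vec (shift_vec (c # cs) \<mu>) k = pochhammer (c + \<mu>) k * poch_vec (shift_vec cs \<mu>) k" for \<mu>
    by (simp add: poch_vec_def shift_vec_def)
  moreover have "isCont (\<lambda>\<mu>. pochhammer (c + \<mu>) k) \<mu>"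
    unfolding pochhammer_prod by (intro continuous_intros)
  ultimately show ?case using Cons by (simp add: continuous_mult)
qed (simp add: poch_vec_def shift_vec_def)

lemma esym_ratio_antimono:
  fixes A B :: "real list"
  assumes mn: "length A \<le> length B"
    and chain: "\<forall>k < length A. esym (length B - k) B / esym (length A - k) A
        \<le> esym (length B - k - 1) B / esym (length A - k - 1) A"
    and "j \<le> l" "l \<le> length A"
  shows "esym (length B - length A + l) B / esym l A \<le> esym (length B - length A + j) B / esym j A"
  using assms(3,4)
proof (induction l rule: dec_induct)
  case (step l)
  have "length B - (length A - Suc l) = length B - length A + Suc l"
    "length B - (length A - Suc l) - 1 = length B - length A + l"
    using step.prems mn by auto
  hence "esym (length B - length A + Suc l) B / esym (Suc l) A \<le> esym (length B - length A + l) B / esym l A"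
    using chain[rule_format, of "length A - Suc l"] step.prems by simp
  thus ?case using step.IH step.prems by simp
qed simp

text \<open>The chain of inequalities between the ratios of elementary symmetric functions is exactly
  what makes the ratio \<open>\<Prod>(a\<^sub>i + t) / \<Prod>(b\<^sub>i + t)\<close> nonincreasing on \<open>[0, \<infinity>)\<close>: the lowest
  \<open>m + 1\<close> coefficients of the denominator are those of the numerator times the
  nonincreasing factors \<open>\<rho>\<close>, and the remaining ones carry higher powers of \<open>t\<close>.\<close>

lemma prod_list_shift_ratio_antimono:
  fixes A B :: "real list" and t t' :: real
  assumes posA: "\<forall>v\<in>set A. 0 < v" and posB: "\<forall>v\<in>set B. 0 < v"
    and mn: "length A \<le> length B"
    and chain: "\<forall>k < length A. esym (length B - k) B / esym (length A - k) A
        \<le> esym (length B - k - 1) B / esym (length A - k - 1) A"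
    and t: "0 \<le> t" "t \<le> t'"
  shows "prod_list (map (\<lambda>b. b + t) B) * prod_list (map (\<lambda>a. a + t') A)
       \<le> prod_list (map (\<lambda>b. b + t') B) * prod_list (map (\<lambda>a. a + t) A)"
proof -
  define m where "m = length A"
  define n where "n = length B"
  define \<rho> where "\<rho> j = esym (n - m + j) B / esym j A" for j
  have \<rho>_antimono: "\<rho> l \<le> \<rho> j" if "j \<le> l" "l \<le> m" for j l
    using esym_ratio_antimono[OF mn chain that[unfolded m_def]] by (simp add: \<rho>_def m_def n_def)
  define P where "P s = (\<Sum>j\<le>m. esym j A * s ^ (m - j))" for s :: real
  define R where "R s = (\<Sum>i<n - m. esym i B * s ^ (n - i))" for s :: real
  define Q where "Q s = (\<Sum>j\<le>m. \<rho> j * esym j A * s ^ (m - j))" for s :: real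
  have A_eq: "prod_list (map (\<lambda>a. a + s) A) = P s" for s
    unfolding P_def m_def by (rule prod_list_plus_esym)
  have B_eq: "prod_list (map (\<lambda>b. b + s) B) = R s + Q s" for s
  proof -
    have "prod_list (map (\<lambda>b. b + s) B) = (\<Sum>i\<le>n. esym i B * s ^ (n - i))"
      unfolding n_def by (rule prod_list_plus_esym)
    also have "\<dots> = R s + (\<Sum>i\<in>{n - m..n}. esym i B * s ^ (n - i))"
      unfolding R_def by (subst sum.union_disjoint[symmetric]) (auto intro!: sum.cong)
    also have "(\<Sum>i\<in>{n - m..n}. esym i B * s ^ (n - i)) = (\<Sum>j\<le>m. esym (n - m + j) B * s ^ (m - j))"
      using mn unfolding m_def n_def
      by (subst sum.atLeastAtMost_shift_0) (auto simp: atLeast0AtMost intro!: sum.cong)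
    also have "\<dots> = Q s"
      unfolding Q_def
    proof (intro sum.cong refl)
      fix j assume "j \<in> {..m}"
      hence "0 < esym j A" using esym_pos[OF posA] by (simp add: m_def)
      thus "esym (n - m + j) B * s ^ (m - j) = \<rho> j * esym j A * s ^ (m - j)" by (simp add: \<rho>_def)
    qed
    finally show ?thesis .
  qed
  have "R t * P t' \<le> R t' * P t"
    unfolding R_def P_def using esym_nonneg posA posB t
    by (intro sum_powers_higher_degree_cross_le) (auto simp: less_imp_le)
  moreover have "Q t * P t' \<le> Q t' * P t"
    unfolding Q_def P_def using esym_nonneg posA t
    by (intro sum_powers_antimono_weights_cross_le \<rho>_antimono) (auto simp: less_imp_le)
  ultimately show ?thesis unfolding A_eq B_eq by (simp add: algebra_simps)
qed

lemma quasiconcave_on_nat_if_decrease_persists: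
  fixes r :: "nat \<Rightarrow> 'a::linorder"
  assumes persist: "\<And>k. r (Suc k) \<le> r k \<Longrightarrow> r (Suc (Suc k)) \<le> r (Suc k)"
  shows "quasiconcave_on UNIV r"
  unfolding quasiconcave_on_def
proof (intro ballI impI)
  fix i j l :: nat assume "i < j" "j < l"
  show "min (r i) (r l) \<le> r j"
  proof (cases "\<exists>k. i \<le> k \<and> k < j \<and> r (Suc k) \<le> r k")
    case True
    then obtain k where k: "k < j" "r (Suc k) \<le> r k" by blast
    have decreasing: "r (Suc (k + d)) \<le> r (k + d)" for d
      by (induction d) (use k persist in auto)
    have "r (j + d) \<le> r j" for d
    proof (induction d)
      case (Suc d)
      have "r (Suc (j + d)) \<le> r (j + d)" using decreasing[of "j + d - k"] k(1) by simp
      thus ?case using Suc by simp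
    qed simp
    from this[of "l - j"] show ?thesis using \<open>j < l\<close> by (simp add: min.coboundedI2)
  next
    case False
    have "r i \<le> r (i + d)" if "i + d \<le> j" for d
      using that
    proof (induction d)
      case (Suc d)
      have "i \<le> i + d" "i + d < j" using Suc.prems by simp_all
      hence "r (i + d) < r (Suc (i + d))" using False by (meson not_le)
      thus ?case using Suc by simp
    qed simp
    from this[of "j - i"] show ?thesis using \<open>i < j\<close> by (simp add: min.coboundedI1)
  qed
qed

lemma poch_vec_ratio_quasiconcave:
  fixes A B :: "real list"
  assumes posA: "\<forall>v\<in>set A. 0 < v" and posB: "\<forall>v\<in>set B. 0 < v"
    and mn: "length A \<le> length B"
    and chain: "\<forall>k < length A. esym (length B - k) B / esym (length A - k) A
        \<le> esym (length B - k - 1) B / esym (length A - k - 1) A"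
  shows "quasiconcave_on UNIV (\<lambda>k. poch_vec A k / poch_vec B k)"
proof (rule quasiconcave_on_nat_if_decrease_persists)
  define P where "P k = prod_list (map (\<lambda>a. a + real k) A)" for k :: nat
  define Q where "Q k = prod_list (map (\<lambda>b. b + real k) B)" for k :: nat
  have P_pos: "0 < P k" and Q_pos: "0 < Q k" for k
    using prod_list_shift_pos posA posB by (simp_all add: P_def Q_def)
  have decrease_iff: "poch_vec A (Suc k) / poch_vec B (Suc k) \<le> poch_vec A k / poch_vec B k \<longleftrightarrow> P k \<le> Q k"
    for k
    using poch_vec_pos[OF posA, of k] poch_vec_pos[OF posB, of k] P_pos[of k] Q_pos[of k]
    by (simp add: poch_vec_Suc P_def[symmetric] Q_def[symmetric] field_simps)
  have "P (Suc k) \<le> Q (Suc k)" if "P k \<le> Q k" for k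
  proof -
    have "Q k * P (Suc k) \<le> Q (Suc k) * P k"
      unfolding P_def Q_def by (rule prod_list_shift_ratio_antimono[OF posA posB mn chain]) auto
    moreover have "P k * P (Suc k) \<le> Q k * P (Suc k)" using that P_pos by (simp add: less_imp_le)
    ultimately have "P (Suc k) * P k \<le> Q (Suc k) * P k" by (simp add: mult.commute)
    thus ?thesis using P_pos[of k] by simp
  qed
  thus "poch_vec A (Suc (Suc k)) / poch_vec B (Suc (Suc k)) \<le> poch_vec A (Suc k) / poch_vec B (Suc k)"
    if "poch_vec A (Suc k) / poch_vec B (Suc k) \<le> poch_vec A k / poch_vec B k" for k
    using that by (simp add: decrease_iff)
qed

section \<open>Ratios of kernel series\<close>

lemma sign_regular3_kernelD:
  fixes K :: "real \<Rightarrow> nat \<Rightarrow> real"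
  assumes "sign_regular3 {0<..} UNIV K"
  obtains e1 e2 e3 :: real
  where "e1 = 1 \<or> e1 = -1" "e2 = 1 \<or> e2 = -1" "e3 = 1 \<or> e3 = -1"
    and "\<And>\<mu> k. 0 < \<mu> \<Longrightarrow> 0 \<le> e1 * K \<mu> k"
    and "\<And>\<mu> \<mu>' k k'. 0 < \<mu> \<Longrightarrow> \<mu> < \<mu>' \<Longrightarrow> k < k' \<Longrightarrow>
      0 \<le> e2 * (K \<mu> k * K \<mu>' k' - K \<mu> k' * K \<mu>' k)"
    and "\<And>y k0 k1 k2. 0 < y 0 \<Longrightarrow> y 0 < y 1 \<Longrightarrow> y 1 < y 2 \<Longrightarrow> k0 < k1 \<Longrightarrow> k1 < k2 \<Longrightarrow>
      0 \<le> e3 * det3_cols (\<lambda>i. K (y i) k0) (\<lambda>i. K (y i) k1) (\<lambda>i. K (y i) k2)"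
proof -
  obtain \<epsilon> :: "nat \<Rightarrow> real" where \<epsilon>: "\<forall>m\<in>{1, 2, 3}. (\<epsilon> m = 1 \<or> \<epsilon> m = -1) \<and>
      (\<forall>xs ys. (\<forall>i<m. xs i \<in> {0<..} \<and> ys i \<in> (UNIV :: nat set)) \<longrightarrow>
         (\<forall>i j. i < j \<longrightarrow> j < m \<longrightarrow> xs i < xs j \<and> ys i < ys j) \<longrightarrow>
         0 \<le> \<epsilon> m * Determinant.det (Matrix.mat m m (\<lambda>(i, j). K (xs i) (ys j))))"
    using assms unfolding sign_regular3_def by blast
  have minors: "0 \<le> \<epsilon> m * Determinant.det (Matrix.mat m m (\<lambda>(i, j). K (xs i) (ys j)))"
    if "m \<in> {1, 2, 3}" "\<forall>i<m. 0 < xs i" "\<forall>i j. i < j \<longrightarrow> j < m \<longrightarrow> xs i < xs j \<and> ys i < ys j"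
    for m xs ys
    using \<epsilon> that by auto
  show thesis
  proof (rule that[of "\<epsilon> 1" "\<epsilon> 2" "\<epsilon> 3"])
    show "\<epsilon> 1 = 1 \<or> \<epsilon> 1 = -1" "\<epsilon> 2 = 1 \<or> \<epsilon> 2 = -1" "\<epsilon> 3 = 1 \<or> \<epsilon> 3 = -1" using \<epsilon> by auto
    show "0 \<le> \<epsilon> 1 * K \<mu> k" if "0 < \<mu>" for \<mu> k
    proof -
      have "0 \<le> \<epsilon> 1 * Determinant.det (Matrix.mat 1 1 (\<lambda>(i, j). K \<mu> k))"
        using that by (intro minors) auto
      thus ?thesis unfolding det_mat_1 by simp
    qed
    show "0 \<le> \<epsilon> 2 * (K \<mu> k * K \<mu>' k' - K \<mu> k' * K \<mu>' k)"
      if "0 < \<mu>" "\<mu> < \<mu>'" "k < k'" for \<mu> \<mu>' k k'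
    proof -
      have "0 \<le> \<epsilon> 2 * Determinant.det (Matrix.mat 2 2
          (\<lambda>(i, j). K (if i = 0 then \<mu> else \<mu>') (if j = 0 then k else k')))"
        using that by (intro minors) (auto simp: numeral_2_eq_2 less_Suc_eq)
      thus ?thesis by (simp add: det_mat_2 algebra_simps)
    qed
    show "0 \<le> \<epsilon> 3 * det3_cols (\<lambda>i. K (y i) k0) (\<lambda>i. K (y i) k1) (\<lambda>i. K (y i) k2)"
      if "0 < y 0" "y 0 < y 1" "y 1 < y 2" "k0 < k1" "k1 < k2" for y k0 k1 k2
    proof -
      define ys where "ys i = (if i = 0 then k0 else if i = 1 then k1 else k2)" for i :: nat
      have "0 \<le> \<epsilon> 3 * Determinant.det (Matrix.mat 3 3 (\<lambda>(i, j). K (y i) (ys j)))"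
        using that by (intro minors) (auto simp: ys_def numeral_3_eq_3 numeral_2_eq_2 less_Suc_eq)
      thus ?thesis by (simp add: det_mat_3 ys_def)
    qed
  qed
qed

lemma kernel_le_max_endpoints:
  fixes K :: "real \<Rightarrow> nat \<Rightarrow> real"
  assumes e2: "e2 = 1 \<or> e2 = -1" and K_0: "\<And>\<mu>. 0 < \<mu> \<Longrightarrow> K \<mu> 0 = 1"
    and SR2: "\<And>\<mu> \<mu>' k k'. 0 < \<mu> \<Longrightarrow> \<mu> < \<mu>' \<Longrightarrow> k < k' \<Longrightarrow>
      0 \<le> e2 * (K \<mu> k * K \<mu>' k' - K \<mu> k' * K \<mu>' k)"
    and "0 < u" "u \<le> \<mu>" "\<mu> \<le> v"
  shows "K \<mu> k \<le> max (K u k) (K v k)"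
proof -
  \<comment> \<open>The column \<open>k = 0\<close> of the kernel is constant, so the \<open>2 \<times> 2\<close> minors through it make
    every \<open>K (\<cdot>) k\<close> monotone, in the direction given by \<open>e2\<close>.\<close>
  have mono: "0 \<le> e2 * (K \<mu>' k - K \<mu> k)" if "0 < \<mu>" "\<mu> \<le> \<mu>'" for \<mu> \<mu>'
    using SR2[of \<mu> \<mu>' 0 k] K_0[of \<mu>] K_0[of \<mu>'] that by (cases "k = 0 \<or> \<mu> = \<mu>'") auto
  show ?thesis using mono[of u \<mu>] mono[of \<mu> v] assms(4-6) e2 by auto
qed

lemma quasiconcave_ratio_nonneg_block:
  fixes \<alpha> \<beta> :: "nat \<Rightarrow> real"
  assumes \<beta>: "\<And>k. 0 < \<beta> k" and qc: "quasiconcave_on UNIV (\<lambda>k. \<alpha> k / \<beta> k)"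
    and "i < j" "j < l" "0 \<le> \<alpha> i - \<theta> * \<beta> i" "0 \<le> \<alpha> l - \<theta> * \<beta> l"
  shows "0 \<le> \<alpha> j - \<theta> * \<beta> j"
proof -
  have nonneg_iff: "0 \<le> \<alpha> k - \<theta> * \<beta> k \<longleftrightarrow> \<theta> \<le> \<alpha> k / \<beta> k" for k
    using \<beta>[of k] by (simp add: le_divide_eq)
  have "min (\<alpha> i / \<beta> i) (\<alpha> l / \<beta> l) \<le> \<alpha> j / \<beta> j"
    using qc assms(3,4) by (simp add: quasiconcave_on_def)
  moreover have "\<theta> \<le> \<alpha> i / \<beta> i" "\<theta> \<le> \<alpha> l / \<beta> l" using assms(5,6) nonneg_iff by blast+
  ultimately have "\<theta> \<le> \<alpha> j / \<beta> j" by (auto simp: min_le_iff_disj)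
  thus ?thesis using nonneg_iff by blast
qed

lemma summable_mult_abs_diff:
  fixes K \<alpha> \<beta> :: "nat \<Rightarrow> real"
  assumes "\<And>k. 0 \<le> K k" "\<And>k. 0 \<le> \<alpha> k" "\<And>k. 0 \<le> \<beta> k"
    and "summable (\<lambda>k. K k * \<alpha> k)" "summable (\<lambda>k. K k * \<beta> k)"
  shows "summable (\<lambda>k. K k * \<bar>\<alpha> k - \<theta> * \<beta> k\<bar>)"
proof (rule summable_comparison_test'[of "\<lambda>k. K k * \<alpha> k + \<bar>\<theta>\<bar> * (K k * \<beta> k)"])
  show "summable (\<lambda>k. K k * \<alpha> k + \<bar>\<theta>\<bar> * (K k * \<beta> k))"
    using assms(4,5) by (intro summable_add summable_mult)
  show "norm (K k * \<bar>\<alpha> k - \<theta> * \<beta> k\<bar>) \<le> K k * \<alpha> k + \<bar>\<theta>\<bar> * (K k * \<beta> k)" for k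
  proof -
    have "\<bar>\<alpha> k - \<theta> * \<beta> k\<bar> \<le> \<alpha> k + \<bar>\<theta>\<bar> * \<beta> k"
      using assms(2,3)[of k] abs_triangle_ineq4[of "\<alpha> k" "\<theta> * \<beta> k"] by (simp add: abs_mult)
    hence "K k * \<bar>\<alpha> k - \<theta> * \<beta> k\<bar> \<le> K k * (\<alpha> k + \<bar>\<theta>\<bar> * \<beta> k)"
      using assms(1)[of k] by (rule mult_left_mono)
    thus ?thesis using assms(1)[of k] by (simp add: abs_mult distrib_left mult.left_commute)
  qed
qed

lemma quasiconcave_on_kernel_series_ratio:
  fixes K :: "real \<Rightarrow> nat \<Rightarrow> real" and \<alpha> \<beta> :: "nat \<Rightarrow> real"
  assumes e: "e2 = 1 \<or> e2 = -1" "e3 = 1 \<or> e3 = -1"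
    and K_nonneg: "\<And>\<mu> k. 0 < \<mu> \<Longrightarrow> 0 \<le> K \<mu> k"
    and SR2: "\<And>\<mu> \<mu>' k k'. 0 < \<mu> \<Longrightarrow> \<mu> < \<mu>' \<Longrightarrow> k < k' \<Longrightarrow>
      0 \<le> e2 * (K \<mu> k * K \<mu>' k' - K \<mu> k' * K \<mu>' k)"
    and SR3: "\<And>y k0 k1 k2. 0 < y 0 \<Longrightarrow> y 0 < y 1 \<Longrightarrow> y 1 < y 2 \<Longrightarrow> k0 < k1 \<Longrightarrow> k1 < k2 \<Longrightarrow>
      0 \<le> e3 * det3_cols (\<lambda>i. K (y i) k0) (\<lambda>i. K (y i) k1) (\<lambda>i. K (y i) k2)"
    and \<alpha>: "\<And>k. 0 \<le> \<alpha> k" and \<beta>: "\<And>k. 0 < \<beta> k"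
    and qc: "quasiconcave_on UNIV (\<lambda>k. \<alpha> k / \<beta> k)"
    and summable_\<alpha>: "\<And>\<mu>. 0 < \<mu> \<Longrightarrow> summable (\<lambda>k. K \<mu> k * \<alpha> k)"
    and summable_\<beta>: "\<And>\<mu>. 0 < \<mu> \<Longrightarrow> summable (\<lambda>k. K \<mu> k * \<beta> k)"
    and denom_pos: "\<And>\<mu>. 0 < \<mu> \<Longrightarrow> 0 < (\<Sum>k. K \<mu> k * \<beta> k)"
  shows "quasiconcave_on {0<..} (\<lambda>\<mu>. e2 * e3 * ((\<Sum>k. K \<mu> k * \<alpha> k) / (\<Sum>k. K \<mu> k * \<beta> k)))"
  unfolding quasiconcave_on_def
proof (intro ballI impI)
  define s where "s = e2 * e3"
  define F where "F \<mu> = (\<Sum>k. K \<mu> k * \<alpha> k) / (\<Sum>k. K \<mu> k * \<beta> k)" for \<mu>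
  have "s * s = 1" using e by (auto simp: s_def)
  fix a b c :: real assume abc: "a \<in> {0<..}" "b \<in> {0<..}" "c \<in> {0<..}" "a < b" "b < c"
  show "min (s * F a) (s * F c) \<le> s * F b"
  proof (rule ccontr)
    assume "\<not> min (s * F a) (s * F c) \<le> s * F b"
    \<comment> \<open>Choose a level \<open>\<theta>\<close> strictly between the values; then \<open>\<alpha> - \<theta> \<beta>\<close> is nonnegative exactly
      on a block of consecutive indices, and the kernel transforms it into a function of \<open>\<mu>\<close>
      with the forbidden sign pattern.\<close>
    define \<tau> where "\<tau> = (s * F b + min (s * F a) (s * F c)) / 2"
    define \<theta> where "\<theta> = s * \<tau>"
    define g where "g k = \<alpha> k - \<theta> * \<beta> k" for k
    define y where "y i = (if i = 0 then a else if i = 1 then b else c)" for i :: nat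
    have level: "s * (F \<mu> - \<theta>) = s * F \<mu> - \<tau>" for \<mu>
      using \<open>s * s = 1\<close> by (simp add: \<theta>_def right_diff_distrib mult.assoc[symmetric])
    have series_eq: "(\<Sum>k. K \<mu> k * g k) = (\<Sum>k. K \<mu> k * \<beta> k) * (F \<mu> - \<theta>)" if "0 < \<mu>" for \<mu>
    proof -
      have "(\<Sum>k. K \<mu> k * g k) = (\<Sum>k. K \<mu> k * \<alpha> k) - \<theta> * (\<Sum>k. K \<mu> k * \<beta> k)"
        unfolding g_def using summable_\<alpha>[OF that] summable_\<beta>[OF that]
        by (simp add: right_diff_distrib suminf_diff suminf_mult[symmetric] algebra_simps)
      also have "\<dots> = (\<Sum>k. K \<mu> k * \<beta> k) * (F \<mu> - \<theta>)"
        using denom_pos[OF that] by (simp add: F_def right_diff_distrib mult.commute)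
      finally show ?thesis .
    qed
    have "\<not> (0 < s * (\<Sum>k. K (y 0) k * g k) \<and> s * (\<Sum>k. K (y 1) k * g k) < 0
             \<and> 0 < s * (\<Sum>k. K (y 2) k * g k))"
      unfolding s_def
    proof (rule kernel_series_no_sign_pattern[OF e K_nonneg SR2 SR3])
      show "0 \<le> g j" if "i < j" "j < l" "0 \<le> g i" "0 \<le> g l" for i j l
        using quasiconcave_ratio_nonneg_block[OF \<beta> qc] that by (simp add: g_def)
      show "summable (\<lambda>k. K \<mu> k * \<bar>g k\<bar>)" if "0 < \<mu>" for \<mu>
        unfolding g_def using K_nonneg[OF that] \<alpha> \<beta> summable_\<alpha>[OF that] summable_\<beta>[OF that]
        by (intro summable_mult_abs_diff) (auto intro: less_imp_le)
    qed (use abc in \<open>simp_all add: y_def\<close>)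
    moreover have sign_eq: "0 < s * (F \<mu> - \<theta>) \<longleftrightarrow> 0 < s * (\<Sum>k. K \<mu> k * g k)"
      "s * (F \<mu> - \<theta>) < 0 \<longleftrightarrow> s * (\<Sum>k. K \<mu> k * g k) < 0" if "0 < \<mu>" for \<mu>
      using denom_pos[OF that] series_eq[OF that]
      by (simp_all add: mult.left_commute zero_less_mult_iff mult_less_0_iff)
    moreover have "s * F b < \<tau>" "\<tau> < s * F a" "\<tau> < s * F c"
      using \<open>\<not> min (s * F a) (s * F c) \<le> s * F b\<close> by (auto simp: \<tau>_def min_def)
    hence "0 < s * (F a - \<theta>)" "s * (F b - \<theta>) < 0" "0 < s * (F c - \<theta>)" by (simp_all add: level)
    ultimately show False using sign_eq abc by (auto simp: y_def)
  qed
qed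

lemma unimodal_on_kernel_series_ratio:
  fixes K :: "real \<Rightarrow> nat \<Rightarrow> real" and \<alpha> \<beta> :: "nat \<Rightarrow> real"
  assumes SR: "sign_regular3 {0<..} UNIV K"
    and K_0: "\<And>\<mu>. 0 < \<mu> \<Longrightarrow> K \<mu> 0 = 1"
    and K_cont: "\<And>\<mu> k. 0 < \<mu> \<Longrightarrow> isCont (\<lambda>\<mu>. K \<mu> k) \<mu>"
    and \<alpha>: "\<And>k. 0 \<le> \<alpha> k" and \<beta>: "\<And>k. 0 < \<beta> k"
    and qc: "quasiconcave_on UNIV (\<lambda>k. \<alpha> k / \<beta> k)"
    and summable_\<alpha>: "\<And>\<mu>. 0 < \<mu> \<Longrightarrow> summable (\<lambda>k. K \<mu> k * \<alpha> k)"
    and summable_\<beta>: "\<And>\<mu>. 0 < \<mu> \<Longrightarrow> summable (\<lambda>k. K \<mu> k * \<beta> k)"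
  shows "unimodal_on {0<..} (\<lambda>\<mu>. (\<Sum>k. K \<mu> k * \<alpha> k) / (\<Sum>k. K \<mu> k * \<beta> k))"
proof -
  obtain e1 e2 e3 where e: "e1 = 1 \<or> e1 = -1" "e2 = 1 \<or> e2 = -1" "e3 = 1 \<or> e3 = -1"
    and SR1: "\<And>\<mu> k. 0 < \<mu> \<Longrightarrow> 0 \<le> e1 * K \<mu> k"
    and SR2: "\<And>\<mu> \<mu>' k k'. 0 < \<mu> \<Longrightarrow> \<mu> < \<mu>' \<Longrightarrow> k < k' \<Longrightarrow>
      0 \<le> e2 * (K \<mu> k * K \<mu>' k' - K \<mu> k' * K \<mu>' k)"
    and SR3: "\<And>y k0 k1 k2. 0 < y 0 \<Longrightarrow> y 0 < y 1 \<Longrightarrow> y 1 < y 2 \<Longrightarrow> k0 < k1 \<Longrightarrow> k1 < k2 \<Longrightarrow>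
      0 \<le> e3 * det3_cols (\<lambda>i. K (y i) k0) (\<lambda>i. K (y i) k1) (\<lambda>i. K (y i) k2)"
    using sign_regular3_kernelD[OF SR] by blast
  have K_nonneg: "0 \<le> K \<mu> k" if "0 < \<mu>" for \<mu> k
    using SR1[OF that, of k] SR1[OF that, of 0] K_0[OF that] e(1) by auto
  have K_between: "K \<mu> k \<le> max (K u k) (K v k)" if "0 < u" "u \<le> \<mu>" "\<mu> \<le> v" for u \<mu> v k
    using kernel_le_max_endpoints[of e2 K, OF e(2) K_0 SR2 that] .
  define N where "N \<mu> = (\<Sum>k. K \<mu> k * \<alpha> k)" for \<mu>
  define D where "D \<mu> = (\<Sum>k. K \<mu> k * \<beta> k)" for \<mu>
  have D_pos: "0 < D \<mu>" if "0 < \<mu>" for \<mu>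
  proof -
    have "(\<Sum>k<1. K \<mu> k * \<beta> k) \<le> D \<mu>"
      unfolding D_def using K_nonneg[OF that] \<beta>
      by (intro sum_le_suminf summable_\<beta> that) (auto intro: mult_nonneg_nonneg less_imp_le)
    thus ?thesis using K_0[OF that] \<beta>[of 0] by simp
  qed
  have "continuous_on {0<..} (\<lambda>\<mu>. N \<mu> / D \<mu>)"
  proof (intro continuous_at_imp_continuous_on ballI)
    fix \<mu> :: real assume "\<mu> \<in> {0<..}"
    thus "isCont (\<lambda>\<mu>. N \<mu> / D \<mu>) \<mu>"
      unfolding N_def D_def using D_pos[of \<mu>] \<alpha> \<beta>
      by (intro isCont_divide isCont_kernel_series[OF K_cont K_nonneg K_between])
        (auto simp: D_def less_imp_le summable_\<alpha> summable_\<beta>)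
  qed
  moreover have "quasiconcave_on {0<..} (\<lambda>\<mu>. e2 * e3 * (N \<mu> / D \<mu>))"
    unfolding N_def D_def
    by (rule quasiconcave_on_kernel_series_ratio[OF e(2,3) K_nonneg SR2 SR3 \<alpha> \<beta> qc
          summable_\<alpha> summable_\<beta>]) (use D_pos in \<open>auto simp: D_def\<close>)
  ultimately have "unimodal_on {0<..} (\<lambda>\<mu>. e2 * e3 * (N \<mu> / D \<mu>))"
    by (intro unimodal_on_if_quasiconcave continuous_on_mult_left)
  moreover have "e2 * e3 = 1 \<or> e2 * e3 = -1" using e by auto
  ultimately show ?thesis
    unfolding N_def D_def by (auto simp: unimodal_on_uminus_iff)
qed

lemma hyp_term_shift_append:
  "hyp_term (shift_vec c \<mu> @ a) (shift_vec d \<mu> @ b) x k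
     = poch_vec (shift_vec c \<mu>) k / poch_vec (shift_vec d \<mu>) k * hyp_term a b x k"
  by (simp add: hyp_term_def poch_vec_append)

theorem theorem5:
  fixes c d a1 a2 b1 b2 :: "real list" and x :: real
  assumes K_defined: "\<forall>\<mu>>0. \<forall>k. poch_vec (shift_vec d \<mu>) k \<noteq> 0"
    and SR3: "sign_regular3 {0<..} (UNIV :: nat set)
               (\<lambda>\<mu> k. poch_vec (shift_vec c \<mu>) k / poch_vec (shift_vec d \<mu>) k)"
    and pos: "\<forall>v\<in>set a1. v > 0" "\<forall>v\<in>set a2. v > 0" "\<forall>v\<in>set b1. v > 0" "\<forall>v\<in>set b2. v > 0"
    and x_pos: "x > 0"
    and conv_num: "\<forall>\<mu>>0. summable (hyp_term (shift_vec c \<mu> @ a1) (shift_vec d \<mu> @ b1) x)"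
    and conv_den: "\<forall>\<mu>>0. summable (hyp_term (shift_vec c \<mu> @ b2) (shift_vec d \<mu> @ a2) x)"
    and den_nz: "\<forall>\<mu>>0. hypF (shift_vec c \<mu> @ b2) (shift_vec d \<mu> @ a2) x \<noteq> 0"
    and mn: "length (a1 @ a2) \<le> length (b1 @ b2)"
    and chain: "\<forall>k < length (a1 @ a2).
        esym (length (b1 @ b2) - k) (b1 @ b2) / esym (length (a1 @ a2) - k) (a1 @ a2)
        \<le> esym (length (b1 @ b2) - k - 1) (b1 @ b2) / esym (length (a1 @ a2) - k - 1) (a1 @ a2)"
  shows "unimodal_on {0<..} (\<lambda>\<mu>. hypF (shift_vec c \<mu> @ a1) (shift_vec d \<mu> @ b1) x
                                 / hypF (shift_vec c \<mu> @ b2) (shift_vec d \<mu> @ a2) x)"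
proof -
  define K where "K \<mu> k = poch_vec (shift_vec c \<mu>) k / poch_vec (shift_vec d \<mu>) k" for \<mu> k
  have terms: "hyp_term (shift_vec c \<mu> @ a1) (shift_vec d \<mu> @ b1) x = (\<lambda>k. K \<mu> k * hyp_term a1 b1 x k)"
    "hyp_term (shift_vec c \<mu> @ b2) (shift_vec d \<mu> @ a2) x = (\<lambda>k. K \<mu> k * hyp_term b2 a2 x k)" for \<mu>
    by (simp_all add: fun_eq_iff K_def hyp_term_shift_append)
  have terms_pos: "0 < hyp_term a1 b1 x k" "0 < hyp_term b2 a2 x k" for k
    using poch_vec_pos pos x_pos by (simp_all add: hyp_term_def)
  have "(\<lambda>k. hyp_term a1 b1 x k / hyp_term b2 a2 x k) = (\<lambda>k. poch_vec (a1 @ a2) k / poch_vec (b1 @ b2) k)"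
    using poch_vec_pos pos x_pos by (simp add: fun_eq_iff hyp_term_def poch_vec_append field_simps)
  moreover have "quasiconcave_on UNIV (\<lambda>k. poch_vec (a1 @ a2) k / poch_vec (b1 @ b2) k)"
    using pos mn chain by (intro poch_vec_ratio_quasiconcave) auto
  ultimately have "quasiconcave_on UNIV (\<lambda>k. hyp_term a1 b1 x k / hyp_term b2 a2 x k)" by simp
  moreover have "isCont (\<lambda>\<mu>. K \<mu> k) \<mu>" if "0 < \<mu>" for \<mu> k
    using K_defined that by (auto simp: K_def intro!: isCont_divide isCont_poch_vec_shift)
  ultimately show ?thesis
    unfolding hypF_def terms
    by (intro unimodal_on_kernel_series_ratio)
      (use SR3 conv_num conv_den terms_pos in \<open>auto simp: K_def terms less_imp_le\<close>)
qed

end
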